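(* Let $\tau:\mathbb{F}_p((t))^d\to\mathbb{F}_p((t))^d$, $(f_1,\dots,f_d)\mapsto(tf_1,\dots,tf_d)$, and let $\phi:\mathbb{F}_p((t))\to\mathrm{Aut}(\mathbb{F}_p((t))^d)$ be a continuous homomorphism satisfying $\phi(tf)=\tau\circ\phi(f)\circ\tau^{-1}$ for all $f\in\mathbb{F}_p((t))$. Then there is a compact open subgroup $V\le\mathbb{F}_p((t))^d$ such that $\phi(f)(V)=V$ for every $f\in\mathbb{F}_p[[t]]$ and $\tau(V)$ is a proper subgroup of $V$.
   Context: $\mathbb{F}_p((t))$ is the additive group of formal Laurent series over $\mathbb{F}_p$ with its usual locally compact topology, $\mathbb{F}_p[[t]]$ the compact open subgroup of power series. $\mathrm{Aut}(\mathbb{F}_p((t))^d)$ is the group of automorphisms of the topological group $(\mathbb{F}_p((t))^d,+)$ with the Braconnier topology: the group topology with basis of identity neighbourhoods $\{\alpha:\alpha(x)-x\in U,\ \alpha^{-1}(x)-x\in U\ \forall x\in K\}$, $K$ compact, $U$ an identity neighbourhood. *)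

theory Defs
  imports "HOL-Analysis.Analysis" "HOL-Computational_Algebra.Formal_Laurent_Series"
    "HOL-Library.Function_Algebras"
begin

text \<open>The field 'k is a finite field of prime order (i.e. F_p); 'k fls carries the
 library's t-adic metric topology; the vector space 'k fls ^ d is represented as
 functions 'd \<Rightarrow> 'k fls on a finite nonempty index type 'd, with the product topology
 (library instance from Function_Topology).\<close>

definition lf_aut :: "(('d::finite \<Rightarrow> 'k::field fls) \<Rightarrow> ('d \<Rightarrow> 'k fls)) set" where
  "lf_aut = {\<alpha>. bij \<alpha> \<and> (\<forall>x y. \<alpha> (x + y) = \<alpha> x + \<alpha> y)
               \<and> continuous_on UNIV \<alpha> \<and> continuous_on UNIV (inv \<alpha>)}"

definition brac_nbhd ::
  "('d::finite \<Rightarrow> 'k::field fls) set \<Rightarrow> ('d \<Rightarrow> 'k fls) set \<Rightarrow> (('d \<Rightarrow> 'k fls) \<Rightarrow> ('d \<Rightarrow> 'k fls)) set" where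
  "brac_nbhd K U = {\<gamma> \<in> lf_aut. \<forall>x\<in>K. \<gamma> x - x \<in> U \<and> inv \<gamma> x - x \<in> U}"

text \<open>The group topology on Aut whose neighbourhoods of \<alpha> are the translates N \<circ> \<alpha>
 of the basic identity neighbourhoods N.\<close>
definition brac_open :: "(('d::finite \<Rightarrow> 'k::field fls) \<Rightarrow> ('d \<Rightarrow> 'k fls)) set \<Rightarrow> bool" where
  "brac_open S \<longleftrightarrow> S \<subseteq> lf_aut \<and>
     (\<forall>\<alpha>\<in>S. \<exists>K U. compact K \<and> open U \<and> 0 \<in> U \<and>
        {\<beta> \<in> lf_aut. \<beta> \<circ> inv \<alpha> \<in> brac_nbhd K U} \<subseteq> S)"

lemma istopology_brac_open: "istopology brac_open"
  unfolding istopology_def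
proof (intro conjI allI impI)
  fix S T :: "(('d::finite \<Rightarrow> 'k::field fls) \<Rightarrow> ('d \<Rightarrow> 'k fls)) set"
  assume S: "brac_open S" and T: "brac_open T"
  show "brac_open (S \<inter> T)"
    unfolding brac_open_def
  proof (intro conjI ballI)
    show "S \<inter> T \<subseteq> lf_aut" using S unfolding brac_open_def by blast
  next
    fix \<alpha> assume a: "\<alpha> \<in> S \<inter> T"
    obtain K1 U1 where 1: "compact K1" "open U1" "0 \<in> U1"
      "{\<beta> \<in> lf_aut. \<beta> \<circ> inv \<alpha> \<in> brac_nbhd K1 U1} \<subseteq> S"
      using S a unfolding brac_open_def by blast
    obtain K2 U2 where 2: "compact K2" "open U2" "0 \<in> U2"
      "{\<beta> \<in> lf_aut. \<beta> \<circ> inv \<alpha> \<in> brac_nbhd K2 U2} \<subseteq> T"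
      using T a unfolding brac_open_def by blast
    have sub: "brac_nbhd (K1 \<union> K2) (U1 \<inter> U2) \<subseteq> brac_nbhd K1 U1 \<inter> brac_nbhd K2 U2"
      unfolding brac_nbhd_def by blast
    have "{\<beta> \<in> lf_aut. \<beta> \<circ> inv \<alpha> \<in> brac_nbhd (K1 \<union> K2) (U1 \<inter> U2)} \<subseteq> S \<inter> T"
      using sub 1(4) 2(4) by blast
    moreover have "compact (K1 \<union> K2)" using 1(1) 2(1) by (rule compact_Un)
    moreover have "open (U1 \<inter> U2)" using 1(2) 2(2) by (rule open_Int)
    moreover have "0 \<in> U1 \<inter> U2" using 1(3) 2(3) by blast
    ultimately show "\<exists>K U. compact K \<and> open U \<and> 0 \<in> U \<and>
        {\<beta> \<in> lf_aut. \<beta> \<circ> inv \<alpha> \<in> brac_nbhd K U} \<subseteq> S \<inter> T"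
      by (intro exI conjI)
  qed
next
  fix KK :: "(('d::finite \<Rightarrow> 'k::field fls) \<Rightarrow> ('d \<Rightarrow> 'k fls)) set set"
  assume "\<forall>S\<in>KK. brac_open S"
  then have h: "\<And>S. S \<in> KK \<Longrightarrow> brac_open S" by blast
  show "brac_open (\<Union>KK)"
    unfolding brac_open_def
  proof (intro conjI ballI)
    show "\<Union>KK \<subseteq> lf_aut" using h unfolding brac_open_def by blast
  next
    fix \<alpha> assume "\<alpha> \<in> \<Union>KK"
    then obtain S where S: "S \<in> KK" "\<alpha> \<in> S" by blast
    then obtain K0 U0 where 1: "compact K0" "open U0" "0 \<in> U0"
      "{\<beta> \<in> lf_aut. \<beta> \<circ> inv \<alpha> \<in> brac_nbhd K0 U0} \<subseteq> S"
      using h[OF S(1)] unfolding brac_open_def by blast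
    have "{\<beta> \<in> lf_aut. \<beta> \<circ> inv \<alpha> \<in> brac_nbhd K0 U0} \<subseteq> \<Union>KK"
      using 1(4) S(1) by blast
    then show "\<exists>K U. compact K \<and> open U \<and> 0 \<in> U \<and>
        {\<beta> \<in> lf_aut. \<beta> \<circ> inv \<alpha> \<in> brac_nbhd K U} \<subseteq> \<Union>KK"
      using 1(1-3) by (intro exI conjI)
  qed
qed

definition brac_topology :: "(('d::finite \<Rightarrow> 'k::field fls) \<Rightarrow> ('d \<Rightarrow> 'k fls)) topology" where
  "brac_topology = topology brac_open"

lemma openin_brac_topology: "openin brac_topology = brac_open"
  unfolding brac_topology_def by (rule topology_inverse'[OF istopology_brac_open])

definition add_subgroup :: "'a::ab_group_add set \<Rightarrow> bool" where
  "add_subgroup V \<longleftrightarrow> 0 \<in> V \<and> (\<forall>x\<in>V. \<forall>y\<in>V. x + y \<in> V \<and> - x \<in> V)"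

end

theory Submission
  imports Defs
begin

unbundle fps_syntax

text \<open>The lattice \<open>L = \<bbbF>[[t]]\<^sup>d\<close> is a compact open subgroup, and the automorphisms \<open>\<gamma>\<close> with
  \<open>\<gamma> x - x \<in> L\<close> and \<open>\<gamma>\<^sup>-\<^sup>1 x - x \<in> L\<close> for all \<open>x \<in> L\<close> form an open subset \<open>N\<close> of \<open>Aut\<close>, each
  of which maps \<open>L\<close> onto \<open>L\<close>. By continuity, \<open>\<phi>\<close> maps a ball \<open>t\<^sup>m\<bbbF>[[t]]\<close> into \<open>N\<close>.
  Iterating the equivariance gives \<open>\<phi>(t\<^sup>m f) \<circ> \<tau>\<^sup>m = \<tau>\<^sup>m \<circ> \<phi>(f)\<close>, so for \<open>f \<in> \<bbbF>[[t]]\<close> the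
  automorphism \<open>\<phi>(f)\<close> preserves \<open>V = \<tau>\<^sup>-\<^sup>m L = t\<^sup>-\<^sup>m\<bbbF>[[t]]\<^sup>d\<close>, and \<open>\<tau> V = t V\<close> is a proper
  subgroup of \<open>V\<close>.\<close>

lemma dist_fls_eq_powr:
  fixes a b :: "'a::group_add fls"
  assumes "a \<noteq> b"
  shows "dist a b = 2 powr - of_int (fls_subdegree (a - b))"
proof (cases "fls_subdegree (a - b) \<ge> 0")
  case True
  then show ?thesis using assms
    by (simp add: dist_fls_def powr_minus powr_realpow[symmetric])
next
  case False
  then have "real (nat (- fls_subdegree (a - b))) = - of_int (fls_subdegree (a - b))" by simp
  then show ?thesis using assms False
    by (simp add: dist_fls_def powr_realpow[symmetric])
qed

lemma dist_fls_le_powr: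
  fixes a b :: "'a::group_add fls"
  assumes "\<And>i. i < m \<Longrightarrow> a $$ i = b $$ i"
  shows "dist a b \<le> 2 powr - of_int m"
proof (cases "a = b")
  case False
  have "m \<le> fls_subdegree (a - b)"
    using False assms by (intro fls_subdegree_geI) auto
  then show ?thesis using False by (simp add: dist_fls_eq_powr)
qed simp

lemma fls_nth_eq_if_dist_less_powr:
  fixes a b :: "'a::group_add fls"
  assumes "dist a b < 2 powr - of_int m" and "i \<le> m"
  shows "a $$ i = b $$ i"
proof (cases "a = b")
  case False
  then have "m < fls_subdegree (a - b)" using assms(1) by (simp add: dist_fls_eq_powr)
  then have "(a - b) $$ i = 0" using assms(2) by (intro fls_eq0_below_subdegree) simp
  then show ?thesis by simp
qed simp

lemma ex_powr_neg_less: "(e::real) > 0 \<Longrightarrow> \<exists>m::int. 2 powr - of_int m < e"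
proof -
  assume "e > 0"
  then obtain n where "(inverse 2 :: real) ^ n < e" using real_arch_pow_inv[of e "inverse 2"] by auto
  then have "2 powr - of_int (int n) < e"
    by (simp add: powr_minus powr_realpow power_one_over inverse_eq_divide)
  then show ?thesis by blast
qed

definition fls_ball :: "int \<Rightarrow> 'a::zero fls set" where
  "fls_ball n = {f. \<forall>i<n. f $$ i = 0}"

definition fls_lattice :: "int \<Rightarrow> ('d \<Rightarrow> 'a::zero fls) set" where
  "fls_lattice n = {x. \<forall>j. x j \<in> fls_ball n}"

lemma totally_bounded_fls_ball:
  fixes e :: real
  assumes "e > 0"
  shows "\<exists>k. finite k \<and> (fls_ball n :: 'a::{group_add,finite} fls set) \<subseteq> (\<Union>x\<in>k. ball x e)"
proof -
  obtain m where m: "2 powr - of_int m < e" using ex_powr_neg_less assms by blast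
  define k :: "'a fls set" where "k = {f. \<forall>i. (i < n \<or> i \<ge> m) \<longrightarrow> f $$ i = 0}"
  have "finite k"
  proof (rule inj_on_finite)
    show "inj_on (\<lambda>f. restrict (fls_nth f) {n..<m}) k"
    proof (rule inj_onI, rule fls_eqI)
      fix f g i assume "f \<in> k" "g \<in> k"
        and "restrict (fls_nth f) {n..<m} = restrict (fls_nth g) {n..<m}"
      then show "f $$ i = g $$ i"
        by (cases "i \<in> {n..<m}") (auto simp: k_def dest: fun_cong[of _ _ i])
    qed
    show "finite (PiE {n..<m} (\<lambda>_. UNIV :: 'a set))" by (rule finite_PiE) auto
  qed auto
  moreover have "x \<in> (\<Union>y\<in>k. ball y e)" if x: "x \<in> fls_ball n" for x
  proof -
    \<comment> \<open>truncating \<open>x\<close> above degree \<open>m\<close> yields a nearby element of \<open>k\<close>\<close>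
    define y where "y = Abs_fls (\<lambda>i. if i < m then x $$ i else 0)"
    have y_nth: "y $$ i = (if i < m then x $$ i else 0)" for i
      unfolding y_def
      by (rule nth_Abs_fls_lower_bound[of n]) (use x in \<open>auto simp: fls_ball_def\<close>)
    have "y \<in> k" using x by (auto simp: k_def y_nth fls_ball_def)
    moreover have "dist y x \<le> 2 powr - of_int m"
      by (rule dist_fls_le_powr) (simp add: y_nth)
    ultimately show ?thesis using m by force
  qed
  ultimately show ?thesis by blast
qed

lemma complete_fls_ball: "complete (fls_ball n :: 'a::group_add fls set)"
  unfolding complete_def
proof (intro allI impI, elim conjE)
  fix x :: "nat \<Rightarrow> 'a fls"
  assume x_ball: "\<forall>p. x p \<in> fls_ball n" and "Cauchy x"
  then have "\<forall>j. \<exists>M. \<forall>p\<ge>M. \<forall>q\<ge>M. dist (x p) (x q) < 2 powr - of_int j"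
    unfolding Cauchy_def by simp
  then obtain M where M: "\<And>j p q. p \<ge> M j \<Longrightarrow> q \<ge> M j \<Longrightarrow> dist (x p) (x q) < 2 powr - of_int j"
    by metis
  have agree: "x p $$ i = x q $$ i" if "p \<ge> M j" "q \<ge> M j" "i \<le> j" for p q i j
    using fls_nth_eq_if_dist_less_powr[OF M[OF that(1,2)] that(3)] .
  define l where "l = Abs_fls (\<lambda>i. x (M i) $$ i)"
  have l_nth: "l $$ i = x (M i) $$ i" for i
    unfolding l_def
    by (rule nth_Abs_fls_lower_bound[of n]) (use x_ball in \<open>auto simp: fls_ball_def\<close>)
  have x_nth: "x p $$ i = l $$ i" if "p \<ge> M j" "i \<le> j" for p i j
    using agree[of j p "max p (M i)" i] agree[of i "max p (M i)" "M i" i] that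
    by (simp add: l_nth)
  have "x \<longlonglongrightarrow> l"
  proof (rule metric_LIMSEQ_I)
    fix r :: real assume "r > 0"
    then obtain m where m: "2 powr - of_int m < r" using ex_powr_neg_less by blast
    have "dist (x p) l \<le> 2 powr - of_int m" if "p \<ge> M m" for p
      by (rule dist_fls_le_powr) (use x_nth[OF that] in auto)
    with m show "\<exists>p0. \<forall>p\<ge>p0. dist (x p) l < r" by force
  qed
  moreover have "l \<in> fls_ball n" using x_ball by (auto simp: fls_ball_def l_nth)
  ultimately show "\<exists>l\<in>fls_ball n. x \<longlonglongrightarrow> l" by blast
qed

lemma compact_fls_ball: "compact (fls_ball n :: 'a::{group_add,finite} fls set)"
  unfolding compact_eq_totally_bounded using complete_fls_ball totally_bounded_fls_ball by blast

lemma open_fls_ball: "open (fls_ball n :: 'a::group_add fls set)"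
  unfolding open_dist
proof (intro ballI exI conjI allI impI)
  fix f y :: "'a fls" assume "f \<in> fls_ball n" and "dist y f < 2 powr - of_int n"
  then show "y \<in> fls_ball n"
    using fls_nth_eq_if_dist_less_powr[of y f n] by (auto simp: fls_ball_def)
qed simp

lemma fls_ball_subset_open:
  fixes U :: "'a::group_add fls set"
  assumes "open U" and "0 \<in> U"
  shows "\<exists>m::nat. fls_ball (int m) \<subseteq> U"
proof -
  obtain e where "e > 0" and e: "\<And>y. dist y 0 < e \<Longrightarrow> y \<in> U"
    using assms unfolding open_dist by blast
  then obtain m where m: "2 powr - of_int m < e" using ex_powr_neg_less by blast
  have "dist f 0 < e" if "f \<in> fls_ball (int (nat m))" for f
    using dist_fls_le_powr[of m f 0] that m by (force simp: fls_ball_def)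
  then show ?thesis using e by blast
qed

lemma fls_lattice_PiE: "fls_lattice n = PiE UNIV (\<lambda>_. fls_ball n)"
  by (auto simp: fls_lattice_def PiE_UNIV_domain)

lemma compact_fls_lattice: "compact (fls_lattice n :: ('d::finite \<Rightarrow> 'a::{group_add,finite} fls) set)"
proof -
  have "compactin (product_topology (\<lambda>_. euclidean) UNIV) (PiE UNIV (\<lambda>_::'d. fls_ball n :: 'a fls set))"
    unfolding compactin_PiE compactin_euclidean_iff by (intro disjI2 ballI compact_fls_ball)
  then show ?thesis unfolding fls_lattice_PiE euclidean_product_topology by simp
qed

lemma open_fls_lattice: "open (fls_lattice n :: ('d::finite \<Rightarrow> 'a::group_add fls) set)"
  unfolding fls_lattice_PiE by (rule open_PiE) (auto simp: open_fls_ball)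

lemma add_subgroup_fls_lattice: "add_subgroup (fls_lattice n :: ('d \<Rightarrow> 'a::ab_group_add fls) set)"
  by (auto simp: add_subgroup_def fls_lattice_def fls_ball_def)

lemma fls_shift_image_fls_ball: "fls_shift k ` fls_ball n = fls_ball (n - k)"
proof
  show "fls_shift k ` fls_ball n \<subseteq> fls_ball (n - k)" by (auto simp: fls_ball_def)
  show "fls_ball (n - k) \<subseteq> fls_shift k ` fls_ball n"
  proof
    fix f assume "f \<in> fls_ball (n - k)"
    then have "fls_shift (- k) f \<in> fls_ball n" by (auto simp: fls_ball_def)
    then show "f \<in> fls_shift k ` fls_ball n" by (force simp: fls_shift_fls_shift)
  qed
qed

lemma fls_shift_image_fls_lattice:
  "(\<lambda>x j. fls_shift k (x j)) ` fls_lattice n = fls_lattice (n - k)"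
proof
  show "(\<lambda>x j. fls_shift k (x j)) ` fls_lattice n \<subseteq> fls_lattice (n - k)"
    using fls_shift_image_fls_ball by (fastforce simp: fls_lattice_def)
  show "fls_lattice (n - k) \<subseteq> (\<lambda>x j. fls_shift k (x j)) ` fls_lattice n"
  proof
    fix x assume "x \<in> fls_lattice (n - k)"
    then have "(\<lambda>j. fls_shift (- k) (x j)) \<in> fls_lattice n"
      by (auto simp: fls_lattice_def fls_ball_def)
    then show "x \<in> (\<lambda>x j. fls_shift k (x j)) ` fls_lattice n" by force
  qed
qed

lemma fls_shift_fps_to_fls_mem_fls_ball: "fls_shift (- m) (fps_to_fls f) \<in> fls_ball m"
  by (simp add: fls_ball_def)

lemma funpow_fls_X_mult:
  fixes f :: "'a::{comm_monoid_add,mult_zero,monoid_mult} fls"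
  shows "((*) fls_X ^^ n) f = fls_shift (- int n) f"
  by (induction n) (simp_all add: fls_X_times_conv_shift add.commute)

lemma funpow_fls_X_mult_vec:
  fixes x :: "'d \<Rightarrow> 'a::{comm_monoid_add,mult_zero,monoid_mult} fls"
  shows "((\<lambda>x j. fls_X * x j) ^^ n) x = (\<lambda>j. fls_shift (- int n) (x j))"
  by (induction n) (simp_all add: fls_X_times_conv_shift add.commute)

lemma fls_X_mult_image_fls_lattice_psubset:
  "(\<lambda>x j. fls_X * x j) ` fls_lattice n \<subset> (fls_lattice n :: ('d \<Rightarrow> 'a::{ring_1} fls) set)"
proof -
  have "(\<lambda>x j. fls_X * x j) ` fls_lattice n = (fls_lattice (n + 1) :: ('d \<Rightarrow> 'a fls) set)"
    using fls_shift_image_fls_lattice[of "-1" n] by (simp add: fls_X_times_conv_shift)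
  moreover have "fls_lattice (n + 1) \<subseteq> (fls_lattice n :: ('d \<Rightarrow> 'a fls) set)"
    by (auto simp: fls_lattice_def fls_ball_def)
  moreover have "(\<lambda>_. fls_shift (- n) 1) \<in> (fls_lattice n - fls_lattice (n + 1) :: ('d \<Rightarrow> 'a fls) set)"
    by (auto simp: fls_lattice_def fls_ball_def)
  ultimately show ?thesis by blast
qed

lemma funpow_intertwine:
  assumes "\<And>f. \<phi> (c f) \<circ> \<sigma> = \<sigma> \<circ> \<phi> f"
  shows "\<phi> ((c ^^ n) f) \<circ> \<sigma> ^^ n = \<sigma> ^^ n \<circ> \<phi> f"
proof (induction n)
  case (Suc n)
  have "\<phi> ((c ^^ Suc n) f) \<circ> \<sigma> ^^ Suc n = (\<phi> (c ((c ^^ n) f)) \<circ> \<sigma>) \<circ> \<sigma> ^^ n"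
    by (simp add: o_assoc)
  also have "\<dots> = \<sigma> \<circ> (\<phi> ((c ^^ n) f) \<circ> \<sigma> ^^ n)" by (simp only: assms o_assoc)
  also have "\<dots> = \<sigma> ^^ Suc n \<circ> \<phi> f" by (simp only: Suc funpow.simps(2) o_assoc)
  finally show ?case .
qed simp

lemma image_eq_if_intertwined:
  assumes "\<beta> \<circ> \<sigma> = \<sigma> \<circ> \<alpha>" and "inj \<sigma>" and "\<beta> ` \<sigma> ` V = \<sigma> ` V"
  shows "\<alpha> ` V = V"
proof -
  have "\<sigma> ` \<alpha> ` V = \<sigma> ` V" using assms(1,3) by (metis image_comp)
  then show ?thesis using assms(2) by (simp add: inj_image_eq_iff)
qed

lemma inj_fls_shift_vec: "inj (\<lambda>(x :: 'd \<Rightarrow> 'a::zero fls) j. fls_shift k (x j))"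
  by (rule injI) (simp add: fun_eq_iff fls_shift_eq_iff)

lemma fls_shift_intertwine:
  fixes \<phi> :: "'a::{comm_monoid_add,mult_zero,monoid_mult} fls \<Rightarrow> ('d \<Rightarrow> 'a fls) \<Rightarrow> ('d \<Rightarrow> 'a fls)"
  assumes equiv: "\<And>f. \<phi> (fls_X * f) = \<tau> \<circ> \<phi> f \<circ> inv \<tau>" and tau: "\<tau> = (\<lambda>x j. fls_X * x j)"
  shows "\<phi> (fls_shift (- int n) f) \<circ> (\<lambda>x j. fls_shift (- int n) (x j))
    = (\<lambda>x j. fls_shift (- int n) (x j)) \<circ> \<phi> f"
proof -
  have "inj \<tau>" unfolding tau using inj_fls_shift_vec[of "-1"] by (simp add: fls_X_times_conv_shift)
  then have "\<phi> (fls_X * f) \<circ> \<tau> = \<tau> \<circ> \<phi> f" for f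
    unfolding equiv comp_assoc inv_o_cancel[OF \<open>inj \<tau>\<close>] by simp
  then have "\<phi> (((*) fls_X ^^ n) f) \<circ> \<tau> ^^ n = \<tau> ^^ n \<circ> \<phi> f" by (rule funpow_intertwine)
  moreover have "\<tau> ^^ n = (\<lambda>x j. fls_shift (- int n) (x j))"
    unfolding tau by (simp add: fun_eq_iff funpow_fls_X_mult_vec)
  ultimately show ?thesis unfolding funpow_fls_X_mult by simp
qed

lemma add_subgroup_diff_mem_iff:
  assumes "add_subgroup L" and "y \<in> L"
  shows "x - y \<in> L \<longleftrightarrow> x \<in> L"
  using assms unfolding add_subgroup_def by (metis diff_add_cancel diff_conv_add_uminus)

lemma brac_nbhd_comp:
  assumes L: "add_subgroup L"
    and \<gamma>: "\<gamma> \<in> brac_nbhd L L" and \<alpha>: "\<alpha> \<in> brac_nbhd L L" and aut: "\<gamma> \<circ> \<alpha> \<in> lf_aut"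
  shows "\<gamma> \<circ> \<alpha> \<in> brac_nbhd L L"
proof -
  have "bij \<gamma>" "bij \<alpha>" using \<gamma> \<alpha> by (auto simp: brac_nbhd_def lf_aut_def)
  then have inv_comp: "inv (\<gamma> \<circ> \<alpha>) = inv \<alpha> \<circ> inv \<gamma>" by (simp add: o_inv_distrib)
  have step: "\<beta> (\<delta> x) - x \<in> L" if "x \<in> L"
    and "\<And>x. x \<in> L \<Longrightarrow> \<delta> x - x \<in> L" "\<And>x. x \<in> L \<Longrightarrow> \<beta> x - x \<in> L" for \<beta> \<delta> x
  proof -
    have "\<delta> x \<in> L" using that L add_subgroup_diff_mem_iff by blast
    then have "(\<beta> (\<delta> x) - \<delta> x) + (\<delta> x - x) \<in> L"
      using that L unfolding add_subgroup_def by blast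
    then show ?thesis by simp
  qed
  show ?thesis
    using aut \<gamma> \<alpha> step[of _ \<alpha> \<gamma>] step[of _ "inv \<gamma>" "inv \<alpha>"]
    unfolding brac_nbhd_def by (auto simp: inv_comp)
qed

lemma brac_open_brac_nbhd:
  assumes "add_subgroup L" and "compact L" and "open L"
  shows "brac_open (brac_nbhd L L)"
  unfolding brac_open_def
proof (intro conjI ballI)
  show "brac_nbhd L L \<subseteq> lf_aut" by (auto simp: brac_nbhd_def)
next
  fix \<alpha> assume \<alpha>: "\<alpha> \<in> brac_nbhd L L"
  then have "inv \<alpha> \<circ> \<alpha> = id"
    by (auto simp: brac_nbhd_def lf_aut_def bij_is_inj intro: inv_o_cancel)
  then have "\<beta> \<in> brac_nbhd L L" if "\<beta> \<in> lf_aut" "\<beta> \<circ> inv \<alpha> \<in> brac_nbhd L L" for \<beta>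
    using brac_nbhd_comp[OF assms(1) that(2) \<alpha>] that(1) by (simp flip: o_assoc)
  moreover have "0 \<in> L" using assms(1) by (simp add: add_subgroup_def)
  ultimately show "\<exists>K U. compact K \<and> open U \<and> 0 \<in> U \<and>
      {\<beta> \<in> lf_aut. \<beta> \<circ> inv \<alpha> \<in> brac_nbhd K U} \<subseteq> brac_nbhd L L"
    using assms(2,3) by blast
qed

lemma brac_nbhd_image:
  assumes L: "add_subgroup L" and \<gamma>: "\<gamma> \<in> brac_nbhd L L"
  shows "\<gamma> ` L = L"
proof
  have "bij \<gamma>" and \<gamma>L: "\<And>x. x \<in> L \<Longrightarrow> \<gamma> x - x \<in> L"
    and inv\<gamma>L: "\<And>x. x \<in> L \<Longrightarrow> inv \<gamma> x - x \<in> L"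
    using \<gamma> by (auto simp: brac_nbhd_def lf_aut_def)
  show "\<gamma> ` L \<subseteq> L" using \<gamma>L add_subgroup_diff_mem_iff[OF L] by blast
  show "L \<subseteq> \<gamma> ` L"
  proof
    fix x assume "x \<in> L"
    then have "inv \<gamma> x \<in> L" using inv\<gamma>L add_subgroup_diff_mem_iff[OF L] by blast
    moreover have "x = \<gamma> (inv \<gamma> x)" using \<open>bij \<gamma>\<close> by (simp add: bij_is_surj surj_f_inv_f)
    ultimately show "x \<in> \<gamma> ` L" by blast
  qed
qed

lemma hom_zero_eq_id:
  fixes \<phi> :: "'a::monoid_add \<Rightarrow> 'b \<Rightarrow> 'b"
  assumes "\<And>f g. \<phi> (f + g) = \<phi> f \<circ> \<phi> g" and "inj (\<phi> 0)"
  shows "\<phi> 0 = id"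
proof
  fix x
  have "\<phi> 0 (\<phi> 0 x) = \<phi> 0 x" using assms(1)[of 0 0] by (metis add_0 comp_apply)
  then show "\<phi> 0 x = id x" using assms(2) by (simp add: inj_eq)
qed

lemma continuous_map_brac_topology_fls_ball:
  assumes "continuous_map euclidean brac_topology \<phi>" and "brac_open S" and "\<phi> 0 \<in> S"
  shows "\<exists>m::nat. \<forall>g \<in> fls_ball (int m). \<phi> g \<in> S"
proof -
  have "openin euclidean {g \<in> topspace euclidean. \<phi> g \<in> S}"
    using assms(1) by (rule openin_continuous_map_preimage) (simp add: openin_brac_topology assms(2))
  then have "open {g. \<phi> g \<in> S}" by simp
  then show ?thesis using fls_ball_subset_open[of "{g. \<phi> g \<in> S}"] assms(3) by blast
qed

text \<open>Only the finiteness of the coefficient field is used; the primality of its order is not.\<close>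
theorem mainTheorem11:
  fixes \<phi> :: "'k::{field,finite} fls \<Rightarrow> (('d::finite \<Rightarrow> 'k fls) \<Rightarrow> ('d \<Rightarrow> 'k fls))"
    and \<tau> :: "('d \<Rightarrow> 'k fls) \<Rightarrow> ('d \<Rightarrow> 'k fls)"
  assumes p: "prime CARD('k)"
    and tau: "\<tau> = (\<lambda>x j. fls_X * x j)"
    and into: "\<And>f. \<phi> f \<in> lf_aut"
    and hom: "\<And>f g. \<phi> (f + g) = \<phi> f \<circ> \<phi> g"
    and cont: "continuous_map euclidean brac_topology \<phi>"
    and equiv: "\<And>f. \<phi> (fls_X * f) = \<tau> \<circ> \<phi> f \<circ> inv \<tau>"
  shows "\<exists>V :: ('d \<Rightarrow> 'k fls) set. add_subgroup V \<and> compact V \<and> open V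
           \<and> (\<forall>f \<in> range fps_to_fls. \<phi> f ` V = V)
           \<and> \<tau> ` V \<subset> V"
proof -
  let ?L = "fls_lattice 0 :: ('d \<Rightarrow> 'k fls) set"
  have L: "add_subgroup ?L" "compact ?L" "open ?L"
    by (simp_all add: add_subgroup_fls_lattice compact_fls_lattice open_fls_lattice)
  have "\<phi> 0 = id" using hom into by (intro hom_zero_eq_id) (auto simp: lf_aut_def bij_is_inj)
  then have "\<phi> 0 \<in> brac_nbhd ?L ?L" using into[of 0] L(1) by (simp add: brac_nbhd_def add_subgroup_def)
  then obtain m :: nat where m: "\<And>g. g \<in> fls_ball (int m) \<Longrightarrow> \<phi> g ` ?L = ?L"
    using continuous_map_brac_topology_fls_ball[OF cont brac_open_brac_nbhd[OF L]]
      brac_nbhd_image[OF L(1)] by metis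
  define V :: "('d \<Rightarrow> 'k fls) set" where "V = fls_lattice (- int m)"
  let ?\<sigma> = "\<lambda>x j. fls_shift (- int m) (x j)"
  note intertwine = fls_shift_intertwine[where \<phi> = \<phi> and \<tau> = \<tau>, OF equiv tau]
  have "\<phi> f ` V = V" if f: "f \<in> range fps_to_fls" for f
  proof (rule image_eq_if_intertwined[OF intertwine inj_fls_shift_vec])
    obtain g where f_eq: "f = fps_to_fls g" using f by blast
    have "?\<sigma> ` V = ?L" using fls_shift_image_fls_lattice[of "- int m" "- int m"] by (simp add: V_def)
    then show "\<phi> (fls_shift (- int m) f) ` ?\<sigma> ` V = ?\<sigma> ` V"
      unfolding f_eq using m[OF fls_shift_fps_to_fls_mem_fls_ball] by simp
  qed
  moreover have "\<tau> ` V \<subset> V"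
    unfolding tau V_def by (rule fls_X_mult_image_fls_lattice_psubset)
  moreover have "add_subgroup V" "compact V" "open V"
    unfolding V_def by (simp_all add: add_subgroup_fls_lattice compact_fls_lattice open_fls_lattice)
  ultimately show ?thesis by blast
qed

end
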